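(* Let $\varphi:\mathbb R\to\mathbb R$ be a continuous mapping with $\sup_{x\in\mathbb R}\#\varphi^{-1}(x)<\infty$ and $U(\varphi)<\infty$. Then for any $a\in\mathbb R$ and $b>0$, the closed set $\varphi^{-1}([a-b,a+b])$ is a finite disjoint union of closed intervals $J_1,\dots,J_r$. Moreover, \[\sum_{i=1}^r|J_i|\le2\lceil b\rceil U(\varphi)\qquad\text{and}\qquad r\le\sup_{x\in\mathbb R}\#\varphi^{-1}(x),\] where $\lceil x\rceil$ is the smallest integer greater than or equal to $x$.
   Context: Notation: $|\cdot|$ is Lebesgue measure and $\#$ is cardinality. Definition: $U(\varphi)=\sup_{|I|=1}|\varphi^{-1}(I)|$, the supremum over closed intervals $I\subset\mathbb R$ of length $1$. *)

theory Defs
  imports "HOL-Analysis.Analysis"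
begin

definition fibre_card_sup :: "(real \<Rightarrow> real) \<Rightarrow> enat" where
  "fibre_card_sup \<phi> =
     (SUP y. (if finite (\<phi> -` {y}) then enat (card (\<phi> -` {y})) else \<infinity>))"

definition U :: "(real \<Rightarrow> real) \<Rightarrow> ennreal" where
  "U \<phi> = (SUP t. emeasure lborel (\<phi> -` {t..t+1}))"

end

theory Submission
  imports Defs
begin

(* Let S be the preimage of [a-b, a+b]. Covering [a-b, a+b] by 2 ceil(b) unit intervals gives
   |S| <= 2 ceil(b) U(phi). The frontier of S lies in the finite fibres over a-b and a+b, and a set of
   finite measure with finite frontier contains no half-line, so S is compact; its components are
   closed intervals J_1 < ... < J_r, each with its left endpoint in the frontier.
   To bound r, pick m_0 < J_1 < m_1 < ... < J_r < m_r outside S and eps > 0 such that every phi(m_j)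
   avoids [a-b-eps, a+b+eps]. By the intermediate value theorem phi takes the value a-b-eps or
   a+b+eps on either side of each J_i, which gives 2r distinct points in these two fibres. *)

lemma finite_fibre_if_fibre_card_sup_finite:
  assumes "fibre_card_sup \<phi> < \<infinity>"
  shows "finite (\<phi> -` {y})"
  using assms SUP_upper[of y UNIV "\<lambda>y. if finite (\<phi> -` {y}) then enat (card (\<phi> -` {y})) else \<infinity>"]
  unfolding fibre_card_sup_def by (auto split: if_splits)

lemma card_fibre_le_fibre_card_sup:
  assumes "finite (\<phi> -` {y})"
  shows "enat (card (\<phi> -` {y})) \<le> fibre_card_sup \<phi>"
  using assms SUP_upper[of y UNIV "\<lambda>y. if finite (\<phi> -` {y}) then enat (card (\<phi> -` {y})) else \<infinity>"]
  unfolding fibre_card_sup_def by simp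

lemma emeasure_vimage_Icc_le_nat_times_U:
  fixes \<phi> :: "real \<Rightarrow> real"
  assumes "continuous_on UNIV \<phi>" "n > 0"
  shows "emeasure lborel (\<phi> -` {t..t + real n}) \<le> of_nat n * U \<phi>"
  using assms(2)
proof (induction n rule: nat_induct_non_zero)
  case 1
  show ?case
    unfolding U_def by (auto intro: SUP_upper)
next
  case (Suc n)
  have measurable: "\<phi> -` {u..v} \<in> sets lborel" for u v
    using assms(1) unfolding sets_lborel by (intro borel_closed closed_vimage) auto
  have "\<phi> -` {t..t + real (Suc n)} \<subseteq> \<phi> -` {t..t + real n} \<union> \<phi> -` {t + real n..t + real n + 1}"
    by auto
  then have "emeasure lborel (\<phi> -` {t..t + real (Suc n)})
      \<le> emeasure lborel (\<phi> -` {t..t + real n}) + emeasure lborel (\<phi> -` {t + real n..t + real n + 1})"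
    by (meson measurable emeasure_subadditive emeasure_mono order_trans sets.Un)
  also have "\<dots> \<le> of_nat n * U \<phi> + U \<phi>"
    using Suc.IH by (intro add_mono) (auto simp: U_def intro: SUP_upper)
  finally show ?case
    by (simp add: distrib_right add.commute)
qed

lemma emeasure_vimage_Icc_le_U:
  fixes \<phi> :: "real \<Rightarrow> real"
  assumes "continuous_on UNIV \<phi>" "b > 0"
  shows "emeasure lborel (\<phi> -` {a-b..a+b}) \<le> 2 * of_int \<lceil>b\<rceil> * U \<phi>"
proof -
  define n where "n = 2 * nat \<lceil>b\<rceil>"
  have "n > 0" "a + b \<le> a - b + real n"
    using assms(2) by (auto simp: n_def)
  then have "emeasure lborel (\<phi> -` {a-b..a+b}) \<le> emeasure lborel (\<phi> -` {a-b..a-b + real n})"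
    using assms(1) by (intro emeasure_mono) (auto simp: borel_closed closed_vimage)
  also have "\<dots> \<le> of_nat n * U \<phi>"
    using emeasure_vimage_Icc_le_nat_times_U[OF assms(1) \<open>n > 0\<close>] .
  also have "(of_nat n :: ennreal) = 2 * of_int \<lceil>b\<rceil>"
    using assms(2) by (simp add: n_def ennreal_of_nat_eq_real_of_nat ennreal_mult)
  finally show ?thesis .
qed

lemma frontier_vimage_Icc_subset:
  fixes \<phi> :: "'a::topological_space \<Rightarrow> real"
  assumes "continuous_on UNIV \<phi>"
  shows "frontier (\<phi> -` {\<alpha>..\<beta>}) \<subseteq> \<phi> -` {\<alpha>, \<beta>}"
proof
  fix x assume x: "x \<in> frontier (\<phi> -` {\<alpha>..\<beta>})"
  have "closed (\<phi> -` {\<alpha>..\<beta>})" "open (\<phi> -` {\<alpha><..<\<beta>})"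
    using assms by (auto intro: closed_vimage open_vimage)
  moreover have "\<phi> -` {\<alpha><..<\<beta>} \<subseteq> interior (\<phi> -` {\<alpha>..\<beta>})"
    by (rule interior_maximal) (use calculation in auto)
  ultimately have "x \<in> \<phi> -` {\<alpha>..\<beta>} - \<phi> -` {\<alpha><..<\<beta>}"
    using x by (auto simp: frontier_def closure_closed)
  then show "x \<in> \<phi> -` {\<alpha>, \<beta>}"
    by auto
qed

lemma bounded_if_finite_frontier_finite_emeasure:
  fixes S :: "real set"
  assumes "S \<in> sets lborel" "finite (frontier S)" "emeasure lborel S < \<infinity>"
  shows "bounded S"
proof (rule ccontr)
  assume unbounded: "\<not> bounded S"
  obtain M where M: "\<And>p. p \<in> frontier S \<Longrightarrow> \<bar>p\<bar> \<le> M"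
    using finite_imp_bounded[OF assms(2)] unfolding bounded_real by blast
  obtain x where x: "x \<in> S" "\<bar>x\<bar> > M"
    using unbounded unfolding bounded_real by (meson not_le)
  have halfline: "H \<subseteq> S" if "connected H" "x \<in> H" "\<And>p. p \<in> H \<Longrightarrow> \<bar>p\<bar> > M" for H
    using connected_Int_frontier[OF that(1)] that(2,3) x(1) M by fastforce
  have long: "\<exists>u. {u..u+t} \<subseteq> S" if "t \<ge> 0" for t
  proof (cases "x > 0")
    case True
    then have "{M<..} \<subseteq> S"
      using x by (intro halfline) auto
    then show ?thesis
      using x by (intro exI[of _ "M + 1"]) auto
  next
    case False
    then have "{..<-M} \<subseteq> S"
      using x by (intro halfline) auto
    then show ?thesis
      using x that by (intro exI[of _ "-M - 1 - t"]) auto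
  qed
  define B where "B = enn2real (emeasure lborel S)"
  obtain u where "{u..u + (B + 1)} \<subseteq> S"
    using long[of "B + 1"] by (auto simp: B_def)
  then have "ennreal (B + 1) \<le> emeasure lborel S"
    using emeasure_mono[OF _ assms(1), of "{u..u + (B + 1)}"] by (simp add: B_def)
  also have "\<dots> = ennreal B"
    using assms(3) by (simp add: B_def ennreal_enn2real)
  finally show False
    by (simp add: B_def)
qed

lemma connected_component_eq_Icc:
  fixes S :: "real set"
  assumes "closed S" "bounded S" "x \<in> S"
  obtains c d where "c \<le> d" "connected_component_set S x = {c..d}"
proof -
  have "compact (connected_component_set S x)"
    using closed_connected_component[OF assms(1)] bounded_subset[OF assms(2) connected_component_subset]
    by (simp add: compact_eq_bounded_closed)
  then obtain c d where "connected_component_set S x = {c..d}"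
    using connected_compact_interval_1[of "connected_component_set S x"] by auto
  moreover have "x \<in> connected_component_set S x"
    using assms(3) by simp
  ultimately show thesis
    using that by auto
qed

lemma Inf_connected_component_in_frontier:
  fixes S :: "real set"
  assumes "closed S" "bounded S" "x \<in> S"
  shows "Inf (connected_component_set S x) \<in> frontier S"
proof -
  obtain c d where cd: "c \<le> d" and C: "connected_component_set S x = {c..d}"
    using connected_component_eq_Icc[OF assms] .
  have "{c..d} \<subseteq> S" "x \<in> {c..d}"
    using C connected_component_subset connected_component_refl[OF assms(3)] by blast+
  have "c \<notin> interior S"
  proof
    assume "c \<in> interior S"
    then obtain e where "e > 0" "ball c e \<subseteq> S"
      using mem_interior by blast
    moreover have "{c - e/2..c} \<subseteq> ball c e"
      using \<open>e > 0\<close> by (auto simp: dist_real_def)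
    ultimately have "{c - e/2..d} \<subseteq> S"
      using \<open>{c..d} \<subseteq> S\<close> by (auto simp: subset_iff) (meson atLeastAtMost_iff linorder_le_cases)
    then have "{c - e/2..d} \<subseteq> {c..d}"
      unfolding C[symmetric] using \<open>e > 0\<close> \<open>x \<in> {c..d}\<close>
      by (intro connected_component_maximal) auto
    then show False
      using cd \<open>e > 0\<close> by auto
  qed
  moreover have "c \<in> S"
    using \<open>{c..d} \<subseteq> S\<close> cd by auto
  moreover have "Inf (connected_component_set S x) = c"
    using cd by (simp add: C)
  ultimately show ?thesis
    using assms(1) by (simp add: frontier_def)
qed

lemma UN_connected_components_at_Inf:
  fixes S :: "real set"
  assumes "closed S" "bounded S"
  shows "S = (\<Union>l\<in>{x \<in> S. Inf (connected_component_set S x) = x}. connected_component_set S l)"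
proof
  show "(\<Union>l\<in>{x \<in> S. Inf (connected_component_set S x) = x}. connected_component_set S l) \<subseteq> S"
    using connected_component_subset by blast
next
  show "S \<subseteq> (\<Union>l\<in>{x \<in> S. Inf (connected_component_set S x) = x}. connected_component_set S l)"
  proof
    fix x assume "x \<in> S"
    define l where "l = Inf (connected_component_set S x)"
    obtain u v where "u \<le> v" "connected_component_set S x = {u..v}"
      using connected_component_eq_Icc[OF assms \<open>x \<in> S\<close>] .
    then have "l \<in> connected_component_set S x"
      by (simp add: l_def)
    then have same: "connected_component_set S l = connected_component_set S x"
      by (simp add: connected_component_eq)
    have "l \<in> S"
      using \<open>l \<in> connected_component_set S x\<close> connected_component_subset by blast
    moreover have "Inf (connected_component_set S l) = l"
      using same by (simp add: l_def)
    moreover have "x \<in> connected_component_set S l"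
      using same \<open>x \<in> S\<close> by simp
    ultimately show "x \<in> (\<Union>l\<in>{x \<in> S. Inf (connected_component_set S x) = x}. connected_component_set S l)"
      by blast
  qed
qed

lemma finite_set_strict_mono_enumeration:
  fixes L :: "'a::linorder set"
  assumes "finite L"
  obtains c where "L = c ` {..<card L}" "strict_mono_on {..<card L} c"
proof
  show "L = (!) (sorted_list_of_set L) ` {..<card L}"
    using assms nth_image[of "card L" "sorted_list_of_set L"] by (simp add: atLeast0LessThan)
  show "strict_mono_on {..<card L} ((!) (sorted_list_of_set L))"
    using sorted_wrt_nth_less[OF strict_sorted_list_of_set[of L]] by (intro strict_mono_onI) simp
qed

lemma closed_bounded_finite_frontier_eq_sorted_intervals:
  fixes S :: "real set"
  assumes "closed S" "bounded S" "finite (frontier S)"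
  obtains r :: nat and c d :: "nat \<Rightarrow> real"
  where "\<And>i. i < r \<Longrightarrow> c i \<le> d i" "\<And>i j. i < j \<Longrightarrow> j < r \<Longrightarrow> d i < c j"
    "S = (\<Union>i<r. {c i..d i})"
proof -
  let ?C = "connected_component_set S"
  define L where "L = {x \<in> S. Inf (?C x) = x}"
  have "L \<subseteq> frontier S"
    using Inf_connected_component_in_frontier[OF assms(1,2)] unfolding L_def by force
  then have "finite L"
    using assms(3) finite_subset by blast
  define r where "r = card L"
  obtain c where L_eq: "L = c ` {..<r}" and c_mono: "strict_mono_on {..<r} c"
    by (rule finite_set_strict_mono_enumeration[OF \<open>finite L\<close>, folded r_def])
  define d where "d i = Sup (?C (c i))" for i
  have c_L: "c i \<in> S" "Inf (?C (c i)) = c i" if "i < r" for i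
    using L_eq that unfolding L_def by auto
  have comp: "?C (c i) = {c i..d i}" "c i \<le> d i" if i: "i < r" for i
  proof -
    obtain u v where "u \<le> v" "?C (c i) = {u..v}"
      using connected_component_eq_Icc[OF assms(1,2) c_L(1)[OF i]] .
    then show "?C (c i) = {c i..d i}" "c i \<le> d i"
      using c_L(2)[OF i] unfolding d_def by auto
  qed
  have sorted: "d i < c j" if "i < j" "j < r" for i j
  proof -
    have "c i < c j"
      using strict_mono_onD[OF c_mono] that by simp
    then have "?C (c i) \<noteq> ?C (c j)"
      using c_L(2) that by (metis order.strict_trans order.irrefl)
    then have "{c i..d i} \<inter> {c j..d j} = {}"
      using connected_component_nonoverlap comp that by (metis order.strict_trans)
    then show ?thesis
      using \<open>c i < c j\<close> comp(2)[OF that(2)] by (meson atLeastAtMost_iff disjoint_iff not_le order.strict_implies_order)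
  qed
  have "S = (\<Union>i<r. ?C (c i))"
    using UN_connected_components_at_Inf[OF assms(1,2)] unfolding L_def[symmetric] L_eq
    by (simp add: image_image)
  also have "\<dots> = (\<Union>i<r. {c i..d i})"
    using comp(1) by simp
  finally have "S = (\<Union>i<r. {c i..d i})" .
  with comp(2) sorted show thesis
    by (rule that)
qed

lemma disjoint_family_on_sorted_intervals:
  fixes c d :: "nat \<Rightarrow> 'a::linorder"
  assumes "\<And>i j. i < j \<Longrightarrow> j < r \<Longrightarrow> d i < c j"
  shows "disjoint_family_on (\<lambda>i. {c i..d i}) {..<r}"
  unfolding disjoint_family_on_def
proof (intro ballI impI)
  fix i j assume "i \<in> {..<r}" "j \<in> {..<r}" "i \<noteq> j"
  then have "d i < c j \<or> d j < c i"
    using assms by (auto elim: linorder_neqE_nat)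
  then show "{c i..d i} \<inter> {c j..d j} = {}"
    by auto
qed

lemma vimage_Icc_eq_sorted_intervals:
  fixes \<phi> :: "real \<Rightarrow> real"
  assumes "continuous_on UNIV \<phi>" "\<And>y. finite (\<phi> -` {y})" "emeasure lborel (\<phi> -` {\<alpha>..\<beta>}) < \<infinity>"
  obtains r :: nat and c d :: "nat \<Rightarrow> real"
  where "\<And>i. i < r \<Longrightarrow> c i \<le> d i" "\<And>i j. i < j \<Longrightarrow> j < r \<Longrightarrow> d i < c j"
    "\<phi> -` {\<alpha>..\<beta>} = (\<Union>i<r. {c i..d i})"
proof -
  have closed: "closed (\<phi> -` {\<alpha>..\<beta>})"
    using closed_vimage[OF closed_atLeastAtMost assms(1)] .
  have "\<phi> -` {\<alpha>, \<beta>} = \<phi> -` {\<alpha>} \<union> \<phi> -` {\<beta>}"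
    by auto
  then have "finite (\<phi> -` {\<alpha>, \<beta>})"
    using assms(2) by (simp only: finite_Un)
  then have frontier: "finite (frontier (\<phi> -` {\<alpha>..\<beta>}))"
    by (rule finite_subset[OF frontier_vimage_Icc_subset[OF assms(1)]])
  have "\<phi> -` {\<alpha>..\<beta>} \<in> sets lborel"
    using closed unfolding sets_lborel by (rule borel_closed)
  then have "bounded (\<phi> -` {\<alpha>..\<beta>})"
    using frontier assms(3) by (rule bounded_if_finite_frontier_finite_emeasure)
  then show thesis
    using closed_bounded_finite_frontier_eq_sorted_intervals[OF closed _ frontier] that by blast
qed

lemma finite_sets_separated_by_point:
  fixes A B :: "'a::{dense_linorder, no_top, no_bot} set"
  assumes "finite A" "finite B" "\<And>a b. a \<in> A \<Longrightarrow> b \<in> B \<Longrightarrow> a < b"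
  obtains x where "\<And>a. a \<in> A \<Longrightarrow> a < x" "\<And>b. b \<in> B \<Longrightarrow> x < b"
proof (cases "A = {}"; cases "B = {}")
  assume "A = {}" "B = {}"
  then show thesis
    using that by blast
next
  assume "A = {}" "B \<noteq> {}"
  obtain x where "x < Min B"
    using lt_ex by blast
  then show thesis
    using that \<open>A = {}\<close> assms(2) by (meson Min_le order.strict_trans2 empty_iff)
next
  assume "A \<noteq> {}" "B = {}"
  obtain x where "Max A < x"
    using gt_ex by blast
  then show thesis
    using that \<open>B = {}\<close> assms(1) by (meson Max_ge order.strict_trans1 empty_iff)
next
  assume "A \<noteq> {}" "B \<noteq> {}"
  then have "Max A < Min B"
    using assms by (simp add: Max_in Min_in)
  then obtain x where "Max A < x" "x < Min B"
    using dense by blast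
  then show thesis
    using that assms(1,2) by (meson Max_ge Min_le order.strict_trans1 order.strict_trans2)
qed

lemma sorted_intervals_gap_points:
  fixes c d :: "nat \<Rightarrow> real"
  assumes "\<And>i j. i < j \<Longrightarrow> j < r \<Longrightarrow> d i < c j"
  obtains m where "\<And>i j. i < j \<Longrightarrow> d i < m j" "\<And>i j. j \<le> i \<Longrightarrow> i < r \<Longrightarrow> m j < c i"
proof -
  have "\<exists>x. (\<forall>i<j. d i < x) \<and> (\<forall>i. j \<le> i \<and> i < r \<longrightarrow> x < c i)" for j
  proof -
    obtain x where "\<And>a. a \<in> d ` {..<j} \<Longrightarrow> a < x" "\<And>b. b \<in> c ` {j..<r} \<Longrightarrow> x < b"
      by (rule finite_sets_separated_by_point[of "d ` {..<j}" "c ` {j..<r}"]) (use assms in auto)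
    then show ?thesis
      by (intro exI[of _ x]) auto
  qed
  then obtain m where m: "\<And>j. (\<forall>i<j. d i < m j) \<and> (\<forall>i. j \<le> i \<and> i < r \<longrightarrow> m j < c i)"
    by metis
  show thesis
    by (rule that) (use m in auto)
qed

lemma finite_avoids_enlarged_interval:
  fixes Y :: "real set"
  assumes "finite Y" "Y \<inter> {\<alpha>..\<beta>} = {}"
  obtains \<epsilon> where "\<epsilon> > 0" "Y \<inter> {\<alpha>-\<epsilon>..\<beta>+\<epsilon>} = {}"
proof -
  have "\<forall>\<^sub>F \<epsilon> in at_right 0. y \<notin> {\<alpha>-\<epsilon>..\<beta>+\<epsilon>}" if "y \<in> Y" for y
  proof -
    have "y < \<alpha> \<or> \<beta> < y"
      using assms(2) that by auto
    then show ?thesis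
    proof
      assume "y < \<alpha>"
      then show ?thesis
        by (auto simp: eventually_at_right_field intro!: exI[of _ "\<alpha> - y"])
    next
      assume "\<beta> < y"
      then show ?thesis
        by (auto simp: eventually_at_right_field intro!: exI[of _ "y - \<beta>"])
    qed
  qed
  then have "\<forall>\<^sub>F \<epsilon> in at_right 0. \<epsilon> > 0 \<and> (\<forall>y\<in>Y. y \<notin> {\<alpha>-\<epsilon>..\<beta>+\<epsilon>})"
    using assms(1) by (intro eventually_conj eventually_at_right_less eventually_ball_finite) auto
  then obtain \<epsilon> where "\<epsilon> > 0" "\<forall>y\<in>Y. y \<notin> {\<alpha>-\<epsilon>..\<beta>+\<epsilon>}"
    using eventually_happens' trivial_limit_at_right_real by blast
  then show thesis
    using that by blast
qed

lemma continuous_crosses_enlarged_interval: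
  fixes \<phi> :: "real \<Rightarrow> real"
  assumes "continuous_on UNIV \<phi>" "\<epsilon> > 0" "\<phi> p \<in> {\<alpha>..\<beta>}" "\<phi> q \<notin> {\<alpha>-\<epsilon>..\<beta>+\<epsilon>}"
  obtains x where "x \<in> open_segment p q" "\<phi> x \<in> {\<alpha>-\<epsilon>, \<beta>+\<epsilon>}"
proof -
  let ?I = "\<phi> ` closed_segment p q"
  have "connected ?I"
    using assms(1) by (intro connected_continuous_image continuous_on_subset[OF assms(1)]) auto
  moreover have "\<phi> p \<in> ?I" "\<phi> q \<in> ?I"
    by auto
  ultimately have "\<alpha> - \<epsilon> \<in> ?I \<or> \<beta> + \<epsilon> \<in> ?I"
    using assms(2-4) unfolding connected_iff_interval by (smt (verit) atLeastAtMost_iff)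
  then obtain x where x: "x \<in> closed_segment p q" "\<phi> x \<in> {\<alpha>-\<epsilon>, \<beta>+\<epsilon>}"
    by auto
  moreover have "x \<noteq> p" "x \<noteq> q"
    using x(2) assms(2-4) by auto
  ultimately show thesis
    using that by (auto simp: open_segment_def)
qed

lemma two_crossings_of_enlarged_interval:
  fixes \<phi> :: "real \<Rightarrow> real"
  assumes "continuous_on UNIV \<phi>" "\<epsilon> > 0" "finite (\<phi> -` {\<alpha>-\<epsilon>, \<beta>+\<epsilon>})"
    and "u < c" "c \<le> d" "d < v"
    and "\<phi> c \<in> {\<alpha>..\<beta>}" "\<phi> d \<in> {\<alpha>..\<beta>}"
    and "\<phi> u \<notin> {\<alpha>-\<epsilon>..\<beta>+\<epsilon>}" "\<phi> v \<notin> {\<alpha>-\<epsilon>..\<beta>+\<epsilon>}"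
  shows "2 \<le> card (\<phi> -` {\<alpha>-\<epsilon>, \<beta>+\<epsilon>} \<inter> {u<..<v})"
proof -
  obtain x where x: "x \<in> open_segment c u" "\<phi> x \<in> {\<alpha>-\<epsilon>, \<beta>+\<epsilon>}"
    using continuous_crosses_enlarged_interval[OF assms(1,2,7,9)] .
  obtain x' where x': "x' \<in> open_segment d v" "\<phi> x' \<in> {\<alpha>-\<epsilon>, \<beta>+\<epsilon>}"
    using continuous_crosses_enlarged_interval[OF assms(1,2,8,10)] .
  have "x \<in> {u<..<c}" "x' \<in> {d<..<v}"
    using x(1) x'(1) assms(4,6) by (auto simp: open_segment_eq_real_ivl)
  then have "{x, x'} \<subseteq> \<phi> -` {\<alpha>-\<epsilon>, \<beta>+\<epsilon>} \<inter> {u<..<v}" "x \<noteq> x'"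
    using x(2) x'(2) assms(5) by auto
  then show ?thesis
    using card_mono[of "\<phi> -` {\<alpha>-\<epsilon>, \<beta>+\<epsilon>} \<inter> {u<..<v}" "{x, x'}"] assms(3) by simp
qed

lemma disjoint_family_on_consecutive_Ioo:
  fixes m :: "nat \<Rightarrow> 'a::linorder"
  assumes "\<And>i j. i \<le> j \<Longrightarrow> j \<le> r \<Longrightarrow> m i \<le> m j"
  shows "disjoint_family_on (\<lambda>i. {m i<..<m (Suc i)}) {..<r}"
  unfolding disjoint_family_on_def
proof (intro ballI impI)
  fix i j assume "i \<in> {..<r}" "j \<in> {..<r}" "i \<noteq> j"
  then have "m (Suc i) \<le> m j \<or> m (Suc j) \<le> m i"
    using assms[of "Suc i" j] assms[of "Suc j" i] by (auto elim: linorder_neqE_nat)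
  then show "{m i<..<m (Suc i)} \<inter> {m j<..<m (Suc j)} = {}"
    by auto
qed

lemma card_ge_if_disjoint_blocks:
  assumes "finite T" "finite I" "disjoint_family_on B I" "\<And>i. i \<in> I \<Longrightarrow> k \<le> card (T \<inter> B i)"
  shows "k * card I \<le> card T"
proof -
  have "k * card I \<le> (\<Sum>i\<in>I. card (T \<inter> B i))"
    using sum_mono[of I "\<lambda>_. k"] assms(4) by (simp add: mult.commute)
  also have "\<dots> = card (\<Union>i\<in>I. T \<inter> B i)"
    using assms(1-3) by (intro card_UN_disjoint[symmetric]) (auto simp: disjoint_family_on_def)
  also have "\<dots> \<le> card T"
    using assms(1) by (intro card_mono) auto
  finally show ?thesis .
qed

lemma sorted_intervals_separators:
  fixes \<phi> :: "real \<Rightarrow> real" and c d :: "nat \<Rightarrow> real"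
  assumes less: "\<And>i j. i < j \<Longrightarrow> j < r \<Longrightarrow> d i < c j"
    and S: "\<phi> -` {\<alpha>..\<beta>} = (\<Union>i<r. {c i..d i})"
  obtains \<epsilon> m where "\<epsilon> > 0" "\<And>i j. i < j \<Longrightarrow> d i < m j" "\<And>i j. j \<le> i \<Longrightarrow> i < r \<Longrightarrow> m j < c i"
    "\<And>j. j \<le> r \<Longrightarrow> \<phi> (m j) \<notin> {\<alpha>-\<epsilon>..\<beta>+\<epsilon>}"
proof -
  obtain m where m_lo: "\<And>i j. i < j \<Longrightarrow> d i < m j" and m_hi: "\<And>i j. j \<le> i \<Longrightarrow> i < r \<Longrightarrow> m j < c i"
    using sorted_intervals_gap_points[where c = c and d = d and r = r, OF less] by blast
  have "\<phi> (m j) \<notin> {\<alpha>..\<beta>}" for j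
  proof
    assume "\<phi> (m j) \<in> {\<alpha>..\<beta>}"
    then obtain i where "i < r" "c i \<le> m j" "m j \<le> d i"
      unfolding vimage_eq[symmetric] S by auto
    then show False
      using m_lo[of i j] m_hi[of j i] by linarith
  qed
  then have "(\<lambda>j. \<phi> (m j)) ` {..r} \<inter> {\<alpha>..\<beta>} = {}"
    by blast
  then obtain \<epsilon> where "\<epsilon> > 0" and "(\<lambda>j. \<phi> (m j)) ` {..r} \<inter> {\<alpha>-\<epsilon>..\<beta>+\<epsilon>} = {}"
    using finite_avoids_enlarged_interval[OF finite_imageI[OF finite_atMost]] by blast
  then show thesis
    using that[of \<epsilon> m] m_lo m_hi by (auto simp: disjoint_iff)
qed

lemma sorted_intervals_count_le_card_fibre:
  fixes \<phi> :: "real \<Rightarrow> real" and c d :: "nat \<Rightarrow> real"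
  assumes \<phi>: "continuous_on UNIV \<phi>" and fibres: "\<And>y. finite (\<phi> -` {y})"
    and le: "\<And>i. i < r \<Longrightarrow> c i \<le> d i" and less: "\<And>i j. i < j \<Longrightarrow> j < r \<Longrightarrow> d i < c j"
    and S: "\<phi> -` {\<alpha>..\<beta>} = (\<Union>i<r. {c i..d i})"
  obtains y where "r \<le> card (\<phi> -` {y})"
proof -
  obtain \<epsilon> m where "\<epsilon> > 0" and m_lo: "\<And>i j. i < j \<Longrightarrow> d i < m j"
    and m_hi: "\<And>i j. j \<le> i \<Longrightarrow> i < r \<Longrightarrow> m j < c i"
    and m_far: "\<And>j. j \<le> r \<Longrightarrow> \<phi> (m j) \<notin> {\<alpha>-\<epsilon>..\<beta>+\<epsilon>}"
    using sorted_intervals_separators[where c = c and d = d and r = r, OF less S] by metis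
  define T where "T = \<phi> -` {\<alpha>-\<epsilon>, \<beta>+\<epsilon>}"
  have T_Un: "T = \<phi> -` {\<alpha>-\<epsilon>} \<union> \<phi> -` {\<beta>+\<epsilon>}"
    by (auto simp: T_def)
  then have "finite T"
    using fibres by simp
  have two: "2 \<le> card (T \<inter> {m i<..<m (Suc i)})" if "i < r" for i
    unfolding T_def
  proof (rule two_crossings_of_enlarged_interval[OF \<phi> \<open>\<epsilon> > 0\<close>])
    show "finite (\<phi> -` {\<alpha>-\<epsilon>, \<beta>+\<epsilon>})"
      using \<open>finite T\<close> by (simp add: T_def)
    show "m i < c i" "c i \<le> d i" "d i < m (Suc i)"
      using m_hi[OF order_refl that] le[OF that] m_lo[of i "Suc i"] by simp_all
    have "{c i..d i} \<subseteq> \<phi> -` {\<alpha>..\<beta>}"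
      unfolding S using that by blast
    then show "\<phi> (c i) \<in> {\<alpha>..\<beta>}" "\<phi> (d i) \<in> {\<alpha>..\<beta>}"
      using le[OF that] by auto
    show "\<phi> (m i) \<notin> {\<alpha>-\<epsilon>..\<beta>+\<epsilon>}" "\<phi> (m (Suc i)) \<notin> {\<alpha>-\<epsilon>..\<beta>+\<epsilon>}"
      using m_far that by simp_all
  qed
  have "m i \<le> m j" if "i \<le> j" "j \<le> r" for i j
  proof (cases "i = j")
    case False
    then show ?thesis
      using m_hi[OF order_refl, of i] le[of i] m_lo[of i j] that by simp
  qed simp
  then have "2 * r \<le> card T"
    using card_ge_if_disjoint_blocks[OF \<open>finite T\<close> _ disjoint_family_on_consecutive_Ioo] two by fastforce
  also have "\<dots> \<le> card (\<phi> -` {\<alpha>-\<epsilon>}) + card (\<phi> -` {\<beta>+\<epsilon>})"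
    unfolding T_Un by (rule card_Un_le)
  finally have "r \<le> card (\<phi> -` {\<alpha>-\<epsilon>}) \<or> r \<le> card (\<phi> -` {\<beta>+\<epsilon>})"
    by linarith
  then show thesis
    using that by blast
qed

theorem lemma3p3:
  fixes \<phi> :: "real \<Rightarrow> real" and a b :: real
  assumes "continuous_on UNIV \<phi>"
    and "fibre_card_sup \<phi> < \<infinity>"
    and "U \<phi> < \<infinity>"
    and "b > 0"
  shows "\<exists>(r::nat) (c::nat \<Rightarrow> real) (d::nat \<Rightarrow> real).
           (\<forall>i<r. c i \<le> d i)
         \<and> disjoint_family_on (\<lambda>i. {c i..d i}) {..<r}
         \<and> \<phi> -` {a-b..a+b} = (\<Union>i<r. {c i..d i})
         \<and> (\<Sum>i<r. emeasure lborel {c i..d i}) \<le> 2 * of_int \<lceil>b\<rceil> * U \<phi>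
         \<and> enat r \<le> fibre_card_sup \<phi>"
proof -
  have fibres: "finite (\<phi> -` {y})" for y
    using finite_fibre_if_fibre_card_sup_finite[OF assms(2)] .
  have measure: "emeasure lborel (\<phi> -` {a-b..a+b}) \<le> 2 * of_int \<lceil>b\<rceil> * U \<phi>"
    using emeasure_vimage_Icc_le_U[OF assms(1,4)] .
  then have "emeasure lborel (\<phi> -` {a-b..a+b}) < \<infinity>"
    using assms(3) by (simp add: ennreal_mult_less_top order.strict_trans1 ennreal_mult_eq_top_iff)
  then obtain r and c d :: "nat \<Rightarrow> real" where le: "\<And>i. i < r \<Longrightarrow> c i \<le> d i"
    and less: "\<And>i j. i < j \<Longrightarrow> j < r \<Longrightarrow> d i < c j" and S: "\<phi> -` {a-b..a+b} = (\<Union>i<r. {c i..d i})"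
    using vimage_Icc_eq_sorted_intervals[OF assms(1) fibres] by blast
  have disjoint: "disjoint_family_on (\<lambda>i. {c i..d i}) {..<r}"
    using less by (rule disjoint_family_on_sorted_intervals)
  have "(\<Sum>i<r. emeasure lborel {c i..d i}) = emeasure lborel (\<phi> -` {a-b..a+b})"
    unfolding S using disjoint by (intro sum_emeasure) auto
  moreover obtain y where "r \<le> card (\<phi> -` {y})"
    using sorted_intervals_count_le_card_fibre[OF assms(1) fibres le less S] .
  then have "enat r \<le> fibre_card_sup \<phi>"
    using card_fibre_le_fibre_card_sup[OF fibres, of y] by (meson enat_ord_simps(1) order_trans)
  ultimately show ?thesis
    using le disjoint S measure by (intro exI[of _ r] exI[of _ c] exI[of _ d] conjI) auto
qed

end
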